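(* Let $G=(V,E)$ be a finite simple undirected graph with zipper constraint collection $\mathcal{Z}$, let $D\subseteq Z^2$, and let $\mathbb{S}$ be a downstream-enabled prescription on $D$. Suppose $\mathcal{K}^+$ is a minimum-cardinality clique cover of the augmented graph $G^+(\mathbb{S})$. Then there is a clique cover $\mathcal{K}$ of $G$ with the following properties: (i) $\mathcal{K}$ is faithful to $\mathbb{S}$; (ii) $\mathcal{K}$ satisfies every zipper constraint $(U,W,y)\in\mathcal{Z}$ with $U,W\in D$; (iii) $|\mathcal{K}|=|\mathcal{K}^+|$; and (iv) there is no clique cover $\mathcal{K}_h$ of $G$ that is faithful to $\mathbb{S}$ and has $|\mathcal{K}_h|<|\mathcal{K}|$.
   Context: A clique cover of a graph is a collection of cliques whose union is the vertex set. A zipper constraint collection is a finite set $\mathcal{Z}=\{(U_1,W_1,y_1),\dots,(U_m,W_m,y_m)\}$, where each $U_i,W_i\in E$ is an edge of $G$ and each $y_i$ is a label. A clique cover $\mathcal{K}$ satisfies $(U,W,y)$ if either no clique of $\mathcal{K}$ contains $U$, or some clique of $\mathcal{K}$ contains $W$. Let $Z^2=\{U_1,\dots,U_m,W_1,\dots,W_m\}$. Write $P\uparrow Q$ if $(P,Q,y)\in\mathcal{Z}$ for some $y$, and let $\rightsquigarrow$ be the transitive closure of $\uparrow$ on $Z^2$. A prescription on $D\subseteq Z^2$ is a subset $\mathbb{S}\subseteq D$. It is downstream enabled if, whenever $P_a\in\mathbb{S}$ and $P_a\rightsquigarrow P_b$, we have $P_b\in\mathbb{S}$ or $P_b\notin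 D$. A clique cover $\mathcal{K}$ of $G$ is faithful to $\mathbb{S}$ if every $P\in\mathbb{S}$ lies in some clique of $\mathcal{K}$ and no $P\in D\setminus\mathbb{S}$ lies in any clique of $\mathcal{K}$. Let $G'=(V,E\setminus(D\setminus\mathbb{S}))$. The augmented graph $G^+(\mathbb{S})$ has vertex set $\{[u]:u\in V\}\cup\{[u,w]:\{u,w\}\in\mathbb{S}\}$, where each $[A]$ is a new formal vertex labeled by the set $A$. Two distinct vertices $[A],[B]$ are adjacent if and only if $A\cup B$ is a clique in $G'$. *)

theory Defs
  imports Main
begin

definition simple_graph :: "'a set \<Rightarrow> 'a set set \<Rightarrow> bool" where
  "simple_graph V E \<longleftrightarrow> finite V \<and> (\<forall>e\<in>E. \<exists>u w. e = {u, w} \<and> u \<noteq> w \<and> u \<in> V \<and> w \<in> V)"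

definition is_clique :: "'a set \<Rightarrow> 'a set set \<Rightarrow> 'a set \<Rightarrow> bool" where
  "is_clique V E C \<longleftrightarrow> C \<subseteq> V \<and> (\<forall>u\<in>C. \<forall>w\<in>C. u \<noteq> w \<longrightarrow> {u, w} \<in> E)"

definition is_clique_cover :: "'a set \<Rightarrow> 'a set set \<Rightarrow> 'a set set \<Rightarrow> bool" where
  "is_clique_cover V E K \<longleftrightarrow> (\<forall>C\<in>K. is_clique V E C) \<and> \<Union>K = V"

definition zipper_collection :: "'a set set \<Rightarrow> ('a set \<times> 'a set \<times> 'l) set \<Rightarrow> bool" where
  "zipper_collection E Z \<longleftrightarrow> finite Z \<and> (\<forall>(U, W, y)\<in>Z. U \<in> E \<and> W \<in> E)"

definition satisfies_zipper :: "'a set set \<Rightarrow> ('a set \<times> 'a set \<times> 'l) \<Rightarrow> bool" where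
  "satisfies_zipper K z \<longleftrightarrow> (case z of (U, W, y) \<Rightarrow>
     (\<not> (\<exists>C\<in>K. U \<subseteq> C)) \<or> (\<exists>C\<in>K. W \<subseteq> C))"

definition Z2 :: "('a set \<times> 'a set \<times> 'l) set \<Rightarrow> 'a set set" where
  "Z2 Z = {U. \<exists>W y. (U, W, y) \<in> Z} \<union> {W. \<exists>U y. (U, W, y) \<in> Z}"

definition up_rel :: "('a set \<times> 'a set \<times> 'l) set \<Rightarrow> ('a set \<times> 'a set) set" where
  "up_rel Z = {(P, Q). \<exists>y. (P, Q, y) \<in> Z}"

definition downstream :: "('a set \<times> 'a set \<times> 'l) set \<Rightarrow> ('a set \<times> 'a set) set" where
  "downstream Z = (up_rel Z)\<^sup>+"

definition downstream_enabled ::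
  "('a set \<times> 'a set \<times> 'l) set \<Rightarrow> 'a set set \<Rightarrow> 'a set set \<Rightarrow> bool" where
  "downstream_enabled Z D S \<longleftrightarrow> S \<subseteq> D \<and>
     (\<forall>Pa Pb. Pa \<in> S \<and> (Pa, Pb) \<in> downstream Z \<longrightarrow> Pb \<in> S \<or> Pb \<notin> D)"

definition faithful :: "'a set set \<Rightarrow> 'a set set \<Rightarrow> 'a set set \<Rightarrow> bool" where
  "faithful D S K \<longleftrightarrow> (\<forall>P\<in>S. \<exists>C\<in>K. P \<subseteq> C) \<and> (\<forall>P\<in>D - S. \<forall>C\<in>K. \<not> P \<subseteq> C)"

text \<open>Augmented graph: formal vertex [A] is represented by the set A itself
  ([u] as {u}, [u,w] as {u,w}); these are distinct since edges have two elements.\<close>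
definition aug_vertices :: "'a set \<Rightarrow> 'a set set \<Rightarrow> 'a set set" where
  "aug_vertices V S = {{u} | u. u \<in> V} \<union> S"

definition aug_edges :: "'a set \<Rightarrow> 'a set set \<Rightarrow> 'a set set \<Rightarrow> 'a set set \<Rightarrow> 'a set set set" where
  "aug_edges V E D S = {{A, B} | A B. A \<in> aug_vertices V S \<and> B \<in> aug_vertices V S \<and> A \<noteq> B
      \<and> is_clique V (E - (D - S)) (A \<union> B)}"

end

theory Submission
  imports Defs
begin

text \<open>Write G' for the graph (V, E - (D - S)). A set X of vertices of the augmented graph
  is a clique there exactly when the union of the labels in X is a clique of G', and the
  faithful clique covers of G are exactly the clique covers of G' in which every prescribed
  edge lies in some clique. Taking unions of labels therefore turns clique covers of the
  augmented graph into faithful clique covers of G, and replacing each clique Q of a faithful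
  cover by the vertices [u] and [P] with u, P inside Q turns them back without increasing
  the size. For a minimum cover K+ the union map is injective, because two cliques with the
  same union could be merged into one; hence it yields a faithful cover of size |K+| that no
  faithful cover beats. Faithfulness and downstream enabledness together give the zipper
  constraints.\<close>

lemma is_clique_subset: "is_clique V E C \<Longrightarrow> B \<subseteq> C \<Longrightarrow> is_clique V E B"
  unfolding is_clique_def by blast

lemma is_clique_Union:
  assumes "\<And>A. A \<in> X \<Longrightarrow> is_clique V E A"
    and "\<And>A B. A \<in> X \<Longrightarrow> B \<in> X \<Longrightarrow> A \<noteq> B \<Longrightarrow> is_clique V E (A \<union> B)"
  shows "is_clique V E (\<Union>X)"
  unfolding is_clique_def
proof (intro conjI ballI impI)
  show "\<Union>X \<subseteq> V" using assms(1) unfolding is_clique_def by blast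
  fix u w assume "u \<in> \<Union>X" "w \<in> \<Union>X" "u \<noteq> w"
  then obtain A B where "A \<in> X" "B \<in> X" "u \<in> A \<union> B" "w \<in> A \<union> B" by blast
  moreover have "is_clique V E (A \<union> B)"
    using assms \<open>A \<in> X\<close> \<open>B \<in> X\<close> by (cases "A = B") simp_all
  ultimately show "{u, w} \<in> E" using \<open>u \<noteq> w\<close> unfolding is_clique_def by blast
qed

lemma is_clique_cover_finite: "finite V \<Longrightarrow> is_clique_cover V E K \<Longrightarrow> finite K"
  unfolding is_clique_cover_def by (meson Pow_iff Sup_le_iff finite_Pow_iff finite_subset subsetI)

lemma is_clique_cover_Diff_edges: "is_clique_cover V (E - R) K \<Longrightarrow> is_clique_cover V E K"
  unfolding is_clique_cover_def is_clique_def by blast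

lemma min_clique_cover_not_mergeable:
  assumes "is_clique_cover V E K" "finite K"
    and "\<forall>K'. is_clique_cover V E K' \<longrightarrow> card K \<le> card K'"
    and "C1 \<in> K" "C2 \<in> K" "C1 \<noteq> C2"
  shows "\<not> is_clique V E (C1 \<union> C2)"
proof
  assume "is_clique V E (C1 \<union> C2)"
  define K' where "K' = insert (C1 \<union> C2) (K - {C1, C2})"
  have "is_clique_cover V E K'"
    using assms(1,4,5) \<open>is_clique V E (C1 \<union> C2)\<close> unfolding K'_def is_clique_cover_def by auto
  moreover have "card K' < card K"
  proof -
    have "card {C1, C2} \<le> card K" using assms(2,4,5) by (intro card_mono) auto
    moreover have "card {C1, C2} = 2" using assms(6) by simp
    moreover have "card K' \<le> Suc (card (K - {C1, C2}))"
      unfolding K'_def using assms(2) by (simp add: card_insert_if)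
    moreover have "card (K - {C1, C2}) = card K - 2"
      using assms(2,4,5,6) by (simp add: card_Diff_subset)
    ultimately show ?thesis by linarith
  qed
  ultimately show False using assms(3) by (simp add: not_le[symmetric])
qed

lemma edge_doubleton:
  assumes "simple_graph V E" "P \<in> E"
  obtains u w where "P = {u, w}" "u \<noteq> w" "u \<in> V" "w \<in> V"
  using assms unfolding simple_graph_def by meson

lemma faithful_clique_cover_iff:
  assumes "simple_graph V E" "D \<subseteq> E"
  shows "is_clique_cover V E K \<and> faithful D S K \<longleftrightarrow>
    is_clique_cover V (E - (D - S)) K \<and> (\<forall>P\<in>S. \<exists>C\<in>K. P \<subseteq> C)"
proof
  assume G: "is_clique_cover V E K \<and> faithful D S K"
  have "is_clique V (E - (D - S)) C" if "C \<in> K" for C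
    unfolding is_clique_def
  proof (intro conjI ballI impI)
    have "is_clique V E C" using G that unfolding is_clique_cover_def by blast
    then show "C \<subseteq> V" unfolding is_clique_def by blast
    fix u w assume "u \<in> C" "w \<in> C" "u \<noteq> w"
    with \<open>is_clique V E C\<close> have uw: "{u, w} \<in> E" unfolding is_clique_def by blast
    have "\<forall>P\<in>D - S. \<not> P \<subseteq> C" using G that unfolding faithful_def by blast
    moreover have "{u, w} \<subseteq> C" using \<open>u \<in> C\<close> \<open>w \<in> C\<close> by simp
    ultimately have "{u, w} \<notin> D - S" by metis
    with uw show "{u, w} \<in> E - (D - S)" by blast
  qed
  with G show "is_clique_cover V (E - (D - S)) K \<and> (\<forall>P\<in>S. \<exists>C\<in>K. P \<subseteq> C)"
    unfolding is_clique_cover_def faithful_def by simp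
next
  assume G': "is_clique_cover V (E - (D - S)) K \<and> (\<forall>P\<in>S. \<exists>C\<in>K. P \<subseteq> C)"
  have "\<not> P \<subseteq> C" if "P \<in> D - S" "C \<in> K" for P C
  proof
    assume "P \<subseteq> C"
    have "P \<in> E" using that(1) assms(2) by blast
    with assms(1) obtain u w where P: "P = {u, w}" "u \<noteq> w" by (rule edge_doubleton)
    have "is_clique V (E - (D - S)) C" using G' that(2) unfolding is_clique_cover_def by blast
    then have "{u, w} \<in> E - (D - S)"
      using \<open>P \<subseteq> C\<close> P unfolding is_clique_def by blast
    with P that(1) show False by blast
  qed
  with G' show "is_clique_cover V E K \<and> faithful D S K"
    unfolding faithful_def by (blast intro: is_clique_cover_Diff_edges)
qed

lemma satisfies_zipper_if_faithful:
  assumes "faithful D S K" "downstream_enabled Z D S" "(U, W, y) \<in> Z" "U \<in> D" "W \<in> D"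
  shows "satisfies_zipper K (U, W, y)"
proof (cases "\<exists>C\<in>K. U \<subseteq> C")
  case True
  then have "U \<in> S" using assms(1,4) unfolding faithful_def by blast
  moreover have "(U, W) \<in> downstream Z"
    using assms(3) unfolding downstream_def up_rel_def by blast
  ultimately have "W \<in> S" using assms(2,5) unfolding downstream_enabled_def by blast
  then show ?thesis using assms(1) unfolding faithful_def satisfies_zipper_def by auto
next
  case False
  then show ?thesis unfolding satisfies_zipper_def by auto
qed

lemma finite_Z2: "finite Z \<Longrightarrow> finite (Z2 Z)"
proof -
  assume "finite Z"
  moreover have "Z2 Z = fst ` Z \<union> (fst \<circ> snd) ` Z"
    unfolding Z2_def by (auto simp: image_iff; force)
  ultimately show ?thesis by simp
qed

lemma Z2_subset_edges: "zipper_collection E Z \<Longrightarrow> Z2 Z \<subseteq> E"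
  unfolding zipper_collection_def Z2_def by blast

lemma aug_vertex_is_clique:
  assumes "simple_graph V E" "S \<subseteq> E" "A \<in> aug_vertices V S"
  shows "is_clique V (E - (D - S)) A"
proof -
  from assms(3) consider u where "A = {u}" "u \<in> V" | "A \<in> S"
    unfolding aug_vertices_def by blast
  then show ?thesis
  proof cases
    case 1
    then show ?thesis unfolding is_clique_def by auto
  next
    case 2
    then have "A \<in> E" using assms(2) by blast
    with assms(1) obtain u w where "A = {u, w}" "u \<in> V" "w \<in> V"
      by (rule edge_doubleton)
    moreover have "A \<in> E - (D - S)" using 2 \<open>A \<in> E\<close> by blast
    ultimately show ?thesis unfolding is_clique_def by (auto simp: insert_commute)
  qed
qed

lemma Union_aug_vertices:
  assumes "simple_graph V E" "S \<subseteq> E"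
  shows "\<Union>(aug_vertices V S) = V"
proof
  show "\<Union>(aug_vertices V S) \<subseteq> V"
    using aug_vertex_is_clique[OF assms] unfolding is_clique_def by blast
  show "V \<subseteq> \<Union>(aug_vertices V S)" unfolding aug_vertices_def by blast
qed

lemma aug_edge_iff:
  assumes "A \<in> aug_vertices V S" "B \<in> aug_vertices V S" "A \<noteq> B"
  shows "{A, B} \<in> aug_edges V E D S \<longleftrightarrow> is_clique V (E - (D - S)) (A \<union> B)"
proof
  assume "{A, B} \<in> aug_edges V E D S"
  then obtain A' B' where "{A, B} = {A', B'}" "is_clique V (E - (D - S)) (A' \<union> B')"
    unfolding aug_edges_def by auto
  moreover from \<open>{A, B} = {A', B'}\<close> have "A \<union> B = A' \<union> B'"
    by (auto simp: doubleton_eq_iff)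
  ultimately show "is_clique V (E - (D - S)) (A \<union> B)" by simp
next
  assume "is_clique V (E - (D - S)) (A \<union> B)"
  with assms show "{A, B} \<in> aug_edges V E D S"
    unfolding aug_edges_def by (intro CollectI exI[of _ A] exI[of _ B]) simp
qed

lemma aug_clique_iff_Union_clique:
  assumes "simple_graph V E" "S \<subseteq> E" "X \<subseteq> aug_vertices V S"
  shows "is_clique (aug_vertices V S) (aug_edges V E D S) X \<longleftrightarrow>
    is_clique V (E - (D - S)) (\<Union>X)"
proof
  assume "is_clique (aug_vertices V S) (aug_edges V E D S) X"
  then have "is_clique V (E - (D - S)) (A \<union> B)" if "A \<in> X" "B \<in> X" "A \<noteq> B" for A B
    using that assms(3) aug_edge_iff[of A V S B E D] unfolding is_clique_def by blast
  moreover have "is_clique V (E - (D - S)) A" if "A \<in> X" for A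
    using that assms aug_vertex_is_clique by blast
  ultimately show "is_clique V (E - (D - S)) (\<Union>X)" by (intro is_clique_Union)
next
  assume "is_clique V (E - (D - S)) (\<Union>X)"
  then have "{A, B} \<in> aug_edges V E D S" if "A \<in> X" "B \<in> X" "A \<noteq> B" for A B
    using that assms(3) aug_edge_iff[of A V S B E D] is_clique_subset[of V _ "\<Union>X" "A \<union> B"]
    by blast
  with assms(3) show "is_clique (aug_vertices V S) (aug_edges V E D S) X"
    unfolding is_clique_def by blast
qed

lemma inj_on_Union_min_aug_clique_cover:
  assumes "simple_graph V E" "S \<subseteq> E"
    and "is_clique_cover (aug_vertices V S) (aug_edges V E D S) K" "finite K"
    and "\<forall>K'. is_clique_cover (aug_vertices V S) (aug_edges V E D S) K' \<longrightarrow> card K \<le> card K'"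
  shows "inj_on Union K"
proof (rule inj_onI, rule ccontr)
  fix C1 C2 assume C: "C1 \<in> K" "C2 \<in> K" "\<Union>C1 = \<Union>C2" "C1 \<noteq> C2"
  have aug_clique: "is_clique (aug_vertices V S) (aug_edges V E D S) C" if "C \<in> K" for C
    using assms(3) that unfolding is_clique_cover_def by blast
  have sub: "C \<subseteq> aug_vertices V S" if "C \<in> K" for C
    using aug_clique[OF that] unfolding is_clique_def by blast
  have "is_clique V (E - (D - S)) (\<Union>C1)"
    using aug_clique_iff_Union_clique[OF assms(1,2) sub] aug_clique C(1) by blast
  then have "is_clique V (E - (D - S)) (\<Union>(C1 \<union> C2))" using C(3) by simp
  moreover have "C1 \<union> C2 \<subseteq> aug_vertices V S" using sub C(1,2) by blast
  ultimately have "is_clique (aug_vertices V S) (aug_edges V E D S) (C1 \<union> C2)"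
    using aug_clique_iff_Union_clique[OF assms(1,2)] by blast
  with min_clique_cover_not_mergeable[OF assms(3-5) C(1,2,4)] show False by contradiction
qed

lemma Union_image_aug_clique_cover:
  assumes "simple_graph V E" "S \<subseteq> E"
    and "is_clique_cover (aug_vertices V S) (aug_edges V E D S) K"
  shows "is_clique_cover V (E - (D - S)) (Union ` K) \<and> (\<forall>P\<in>S. \<exists>C\<in>Union ` K. P \<subseteq> C)"
proof (intro conjI ballI)
  have "is_clique V (E - (D - S)) (\<Union>X)" if "X \<in> K" for X
  proof -
    have "is_clique (aug_vertices V S) (aug_edges V E D S) X"
      using assms(3) that unfolding is_clique_cover_def by blast
    moreover from this have "X \<subseteq> aug_vertices V S" unfolding is_clique_def by blast
    ultimately show ?thesis using aug_clique_iff_Union_clique[OF assms(1,2)] by blast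
  qed
  moreover have "\<Union>(Union ` K) = V"
  proof -
    have "\<Union>(Union ` K) = \<Union>(\<Union>K)" by blast
    then show ?thesis
      using assms(3) Union_aug_vertices[OF assms(1,2)] unfolding is_clique_cover_def by simp
  qed
  ultimately show "is_clique_cover V (E - (D - S)) (Union ` K)"
    unfolding is_clique_cover_def by blast
  fix P assume "P \<in> S"
  then have "P \<in> \<Union>K" using assms(3) unfolding is_clique_cover_def aug_vertices_def by blast
  then show "\<exists>C\<in>Union ` K. P \<subseteq> C" by blast
qed

definition aug_lift :: "'a set set \<Rightarrow> 'a set \<Rightarrow> 'a set set" where
  "aug_lift S Q = {{u} | u. u \<in> Q} \<union> {P \<in> S. P \<subseteq> Q}"

lemma Union_aug_lift: "\<Union>(aug_lift S Q) = Q"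
  unfolding aug_lift_def by auto

lemma aug_lift_clique_cover:
  assumes "simple_graph V E" "S \<subseteq> E"
    and "is_clique_cover V (E - (D - S)) K" "\<forall>P\<in>S. \<exists>C\<in>K. P \<subseteq> C"
  shows "is_clique_cover (aug_vertices V S) (aug_edges V E D S) (aug_lift S ` K)"
  unfolding is_clique_cover_def
proof (intro conjI ballI subset_antisym)
  have sub: "aug_lift S Q \<subseteq> aug_vertices V S" if "Q \<in> K" for Q
    using assms(3) that unfolding is_clique_cover_def is_clique_def aug_lift_def aug_vertices_def
    by blast
  then show "\<Union>(aug_lift S ` K) \<subseteq> aug_vertices V S" by blast
  fix X assume "X \<in> aug_lift S ` K"
  then obtain Q where "Q \<in> K" "X = aug_lift S Q" by blast
  moreover have "is_clique V (E - (D - S)) Q" using assms(3) \<open>Q \<in> K\<close>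
    unfolding is_clique_cover_def by blast
  ultimately show "is_clique (aug_vertices V S) (aug_edges V E D S) X"
    using aug_clique_iff_Union_clique[OF assms(1,2) sub] Union_aug_lift by metis
next
  show "aug_vertices V S \<subseteq> \<Union>(aug_lift S ` K)"
    using assms(3,4) unfolding is_clique_cover_def aug_vertices_def aug_lift_def by blast
qed

theorem lemma5:
  fixes V :: "'a set" and E :: "'a set set" and Z :: "('a set \<times> 'a set \<times> 'l) set"
    and D S :: "'a set set" and Kplus :: "'a set set set"
  assumes "simple_graph V E"
    and "zipper_collection E Z"
    and "D \<subseteq> Z2 Z"
    and "S \<subseteq> D"
    and "downstream_enabled Z D S"
    and "is_clique_cover (aug_vertices V S) (aug_edges V E D S) Kplus"
    and "\<forall>K'. is_clique_cover (aug_vertices V S) (aug_edges V E D S) K' \<longrightarrow> card Kplus \<le> card K'"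
  shows "\<exists>K. is_clique_cover V E K
    \<and> faithful D S K
    \<and> (\<forall>(U, W, y)\<in>Z. U \<in> D \<and> W \<in> D \<longrightarrow> satisfies_zipper K (U, W, y))
    \<and> card K = card Kplus
    \<and> \<not> (\<exists>Kh. is_clique_cover V E Kh \<and> faithful D S Kh \<and> card Kh < card K)"
proof -
  have "Z2 Z \<subseteq> E" using assms(2) by (rule Z2_subset_edges)
  with assms(3,4) have DE: "D \<subseteq> E" and SE: "S \<subseteq> E" by auto
  have finV: "finite V" using assms(1) unfolding simple_graph_def by blast
  have "finite (Z2 Z)" using assms(2) finite_Z2 unfolding zipper_collection_def by blast
  then have "finite S" using assms(3,4) by (meson finite_subset subset_trans)
  with finV have "finite (aug_vertices V S)" unfolding aug_vertices_def by simp
  then have "finite Kplus" using assms(6) by (rule is_clique_cover_finite)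
  define K where "K = Union ` Kplus"
  have cover: "is_clique_cover V E K \<and> faithful D S K"
    using faithful_clique_cover_iff[OF assms(1) DE]
      Union_image_aug_clique_cover[OF assms(1) SE assms(6)]
    unfolding K_def by blast
  moreover have "\<forall>(U, W, y)\<in>Z. U \<in> D \<and> W \<in> D \<longrightarrow> satisfies_zipper K (U, W, y)"
    using satisfies_zipper_if_faithful[OF conjunct2[OF cover] assms(5)] by auto
  moreover have "card K = card Kplus"
    unfolding K_def
    using inj_on_Union_min_aug_clique_cover[OF assms(1) SE assms(6) \<open>finite Kplus\<close> assms(7)]
    by (rule card_image)
  moreover have "card Kplus \<le> card Kh" if "is_clique_cover V E Kh" "faithful D S Kh" for Kh
  proof -
    have "finite Kh" using finV that(1) by (rule is_clique_cover_finite)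
    have "is_clique_cover (aug_vertices V S) (aug_edges V E D S) (aug_lift S ` Kh)"
      using aug_lift_clique_cover[OF assms(1) SE] faithful_clique_cover_iff[OF assms(1) DE] that
      by blast
    then have "card Kplus \<le> card (aug_lift S ` Kh)" using assms(7) by blast
    also have "\<dots> \<le> card Kh" using \<open>finite Kh\<close> by (rule card_image_le)
    finally show ?thesis .
  qed
  ultimately show ?thesis by (intro exI[of _ K]) (auto simp: not_less)
qed

end
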